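(* Assume $\pi\ge0$ and that the manufacturer reports truthfully, i.e. $\mathbf r=\mathbf r^{id}$ (the identity matrix), so $\hat\Phi_t=\Phi_t$ for all $t$. Then, for every $j$, almost surely $$\bar D_{j,t}\to\sqrt\alpha\,h_{jj}=\frac{\phi_j-\alpha(C_s+C_m)}{4}.$$ Moreover, the manufacturer's revenue rate satisfies, almost surely, $$\lim_{t\to\infty}\frac1t\sum_{s\le t}D_s\,(P_s-Q_s-C_m)=\frac{1}{16\alpha}\sum_{i=1}^L\sigma_i\big(\phi_i-\alpha(C_s+C_m)\big)^2 .$$ This limit does not depend on $\pi$.
   Context: Supply-chain model. The parameters are a price-sensitivity $\alpha\in(0,1]$, a manufacturer's per-unit production cost $C_m\ge0$, and a supplier's per-unit procurement cost $C_s\ge0$. For $x\in\mathbb R$ write $x^+=\max\{0,x\}$. The market potential takes values $\phi_1<\dots<\phi_L$ with probabilities $\sigma_1,\dots,\sigma_L>0$ summing to $1$, and $\phi_1>\alpha(C_s+C_m)$. Set $$h_{ij}=\frac{2\phi_i-\phi_j-\alpha(C_m+C_s)}{4\sqrt\alpha},\qquad q^*(\phi)=\frac{\phi+\alpha(C_s-C_m)}{2\alpha}.$$ Dynamic system. Let $\mathbf r=(r_{ij})$ be an $L\times L$ stochastic matrix. The pairs $(\Phi_t,\hat\Phi_t)$, $t=1,2,\dots$, are i.i.d. with $P(\Phi_t=\phi_i,\hat\Phi_t=\phi_j)=\sigma_i r_{ij}$. Here $\Phi_t$ is the true potential in slot $t$ and $\hat\Phi_t$ is the reported one. The noises $\{\mathcal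 N_t\}$ are i.i.d., bounded, have zero mean, and are independent of $\{(\Phi_t,\hat\Phi_t)\}$. Fix a penalty parameter $\pi$ and, for each $j$, an arbitrary initial value $\bar D_{j,0}\in\mathbb R$. For $t\ge1$, define $\bar D_{j,t}$ as the average of $D_s$ over the slots $s\le t$ with $\hat\Phi_s=\phi_j$, namely $$\bar D_{j,t}=\frac{\sum_{s\le t}D_s\mathbf 1\{\hat\Phi_s=\phi_j\}}{\sum_{s\le t}\mathbf 1\{\hat\Phi_s=\phi_j\}}.$$ If no such slot exists yet, set $\bar D_{j,t}=\bar D_{j,0}$. In slot $t$, if $\hat\Phi_t=\phi_j$, the supplier quotes $$Q_t=q^*(\phi_j)+2\pi\big(\bar D_{j,t-1}-\sqrt\alpha\,h_{jj}\big).$$ The manufacturer then sets $$P_t=\frac{\Phi_t+\alpha(Q_t+C_m)}{2\alpha},$$ and the realized demand is $$D_t=(\Phi_t-\alpha P_t)^++\mathcal N_t .$$ *)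

theory Defs
  imports "HOL-Probability.Probability"
begin

text \<open>Slots are indexed from 0: the paper's slot t (t = 1,2,...) is slot t-1 here,
  so "the first t slots" are the slots s < t.\<close>

definition qstar :: "real \<Rightarrow> real \<Rightarrow> real \<Rightarrow> real \<Rightarrow> real" where
  "qstar \<alpha> Cm Cs x = (x + \<alpha> * (Cs - Cm)) / (2 * \<alpha>)"

text \<open>h_ij = hc alpha Cm Cs (phi i) (phi j)\<close>
definition hc :: "real \<Rightarrow> real \<Rightarrow> real \<Rightarrow> real \<Rightarrow> real \<Rightarrow> real" where
  "hc \<alpha> Cm Cs x y = (2 * x - y - \<alpha> * (Cm + Cs)) / (4 * sqrt \<alpha>)"

definition r_id :: "nat \<Rightarrow> nat \<Rightarrow> real" where
  "r_id i j = (if i = j then 1 else 0)"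

definition rep_index :: "(nat \<Rightarrow> real) \<Rightarrow> nat \<Rightarrow> real \<Rightarrow> nat" where
  "rep_index \<phi> L v = (THE j. j \<in> {1..L} \<and> \<phi> j = v)"

definition Dbar :: "(nat \<Rightarrow> real) \<Rightarrow> (nat \<Rightarrow> real) \<Rightarrow> (nat \<Rightarrow> real) \<Rightarrow> (nat \<Rightarrow> real)
    \<Rightarrow> nat \<Rightarrow> nat \<Rightarrow> real" where
  "Dbar \<phi> D0 phh D j t =
     (if {s. s < t \<and> phh s = \<phi> j} = {} then D0 j
      else (\<Sum>s\<in>{s. s < t \<and> phh s = \<phi> j}. D s) / real (card {s. s < t \<and> phh s = \<phi> j}))"

definition quote :: "real \<Rightarrow> real \<Rightarrow> real \<Rightarrow> real \<Rightarrow> (nat \<Rightarrow> real) \<Rightarrow> nat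
    \<Rightarrow> (nat \<Rightarrow> real) \<Rightarrow> real \<Rightarrow> real" where
  "quote \<alpha> Cm Cs \<pi> \<phi> L Db v =
     (let j = rep_index \<phi> L v in
      qstar \<alpha> Cm Cs (\<phi> j) + 2 * \<pi> * (Db j - sqrt \<alpha> * hc \<alpha> Cm Cs (\<phi> j) (\<phi> j)))"

definition price :: "real \<Rightarrow> real \<Rightarrow> real \<Rightarrow> real \<Rightarrow> real" where
  "price \<alpha> Cm x q = (x + \<alpha> * (q + Cm)) / (2 * \<alpha>)"

definition demand :: "real \<Rightarrow> real \<Rightarrow> real \<Rightarrow> real \<Rightarrow> real" where
  "demand \<alpha> x p nz = max 0 (x - \<alpha> * p) + nz"

text \<open>List of the demands of the first t slots, given sample paths ph (true potential),
  phh (reported potential), n (noise).\<close>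
fun dem_list :: "real \<Rightarrow> real \<Rightarrow> real \<Rightarrow> real \<Rightarrow> (nat \<Rightarrow> real) \<Rightarrow> nat \<Rightarrow> (nat \<Rightarrow> real)
    \<Rightarrow> (nat \<Rightarrow> real) \<Rightarrow> (nat \<Rightarrow> real) \<Rightarrow> (nat \<Rightarrow> real) \<Rightarrow> nat \<Rightarrow> real list" where
  "dem_list \<alpha> Cm Cs \<pi> \<phi> L D0 ph phh n 0 = []"
| "dem_list \<alpha> Cm Cs \<pi> \<phi> L D0 ph phh n (Suc t) =
     (let ds = dem_list \<alpha> Cm Cs \<pi> \<phi> L D0 ph phh n t;
          q = quote \<alpha> Cm Cs \<pi> \<phi> L (\<lambda>j. Dbar \<phi> D0 phh (\<lambda>s. ds ! s) j t) (phh t)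
      in ds @ [demand \<alpha> (ph t) (price \<alpha> Cm (ph t) q) (n t)])"

definition Dseq :: "real \<Rightarrow> real \<Rightarrow> real \<Rightarrow> real \<Rightarrow> (nat \<Rightarrow> real) \<Rightarrow> nat \<Rightarrow> (nat \<Rightarrow> real)
    \<Rightarrow> (nat \<Rightarrow> real) \<Rightarrow> (nat \<Rightarrow> real) \<Rightarrow> (nat \<Rightarrow> real) \<Rightarrow> nat \<Rightarrow> real" where
  "Dseq \<alpha> Cm Cs \<pi> \<phi> L D0 ph phh n t = dem_list \<alpha> Cm Cs \<pi> \<phi> L D0 ph phh n (Suc t) ! t"

definition Qseq :: "real \<Rightarrow> real \<Rightarrow> real \<Rightarrow> real \<Rightarrow> (nat \<Rightarrow> real) \<Rightarrow> nat \<Rightarrow> (nat \<Rightarrow> real)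
    \<Rightarrow> (nat \<Rightarrow> real) \<Rightarrow> (nat \<Rightarrow> real) \<Rightarrow> (nat \<Rightarrow> real) \<Rightarrow> nat \<Rightarrow> real" where
  "Qseq \<alpha> Cm Cs \<pi> \<phi> L D0 ph phh n t =
     quote \<alpha> Cm Cs \<pi> \<phi> L (\<lambda>j. Dbar \<phi> D0 phh (Dseq \<alpha> Cm Cs \<pi> \<phi> L D0 ph phh n) j t) (phh t)"

definition Pseq :: "real \<Rightarrow> real \<Rightarrow> real \<Rightarrow> real \<Rightarrow> (nat \<Rightarrow> real) \<Rightarrow> nat \<Rightarrow> (nat \<Rightarrow> real)
    \<Rightarrow> (nat \<Rightarrow> real) \<Rightarrow> (nat \<Rightarrow> real) \<Rightarrow> (nat \<Rightarrow> real) \<Rightarrow> nat \<Rightarrow> real" where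
  "Pseq \<alpha> Cm Cs \<pi> \<phi> L D0 ph phh n t =
     price \<alpha> Cm (ph t) (Qseq \<alpha> Cm Cs \<pi> \<phi> L D0 ph phh n t)"

end

theory Submission
  imports Defs
begin

text \<open>Under truthful reporting, slot t with report \<open>\<phi> j\<close> produces the demand
  \<open>max 0 (m - \<pi>\<alpha>(D\<^sub>j - m)) + N\<^sub>t\<close>, where \<open>m = (\<phi> j - \<alpha>(C\<^sub>s + C\<^sub>m))/4\<close> and \<open>D\<^sub>j\<close> is the
  running average of the demands in state j: the penalty feeds the deviation of the average from
  its target back with a negative sign. Hence the accumulated deviation \<open>Z\<close> in state j
  satisfies \<open>|Z\<^sub>t\<^sub>+\<^sub>1| \<le> |Z\<^sub>t| + \<pi>\<alpha>|W\<^sub>t|/n\<^sub>t\<close>, where \<open>n\<^sub>t\<close> counts the visits of state j and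
  \<open>W\<^sub>t\<close> is the accumulated noise there. By the strong law of large numbers (for bounded
  independent variables it follows from Hoeffding's inequality and Borel-Cantelli)
  \<open>n\<^sub>t/t \<rightarrow> \<sigma>\<^sub>j > 0\<close> and \<open>W\<^sub>t/t \<rightarrow> 0\<close>, so \<open>Z\<^sub>t = o(t)\<close> and the average converges to \<open>m\<close>.
  The quote then converges to \<open>q\<^sup>*(\<phi> j)\<close>, the margin per unit to \<open>m/\<alpha>\<close>, and the revenue
  rate to \<open>\<Sum> \<sigma>\<^sub>j m\<^sup>2/\<alpha>\<close>, independently of \<open>\<pi>\<close>.\<close>

section \<open>Averages of real sequences\<close>

lemma sublinear_if_increments_tendsto_zero:
  fixes a b :: "nat \<Rightarrow> real"
  assumes step: "\<And>t. t \<ge> T \<Longrightarrow> a (Suc t) \<le> a t + b t" and b: "b \<longlonglongrightarrow> 0"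
    and nonneg: "\<And>t. 0 \<le> a t"
  shows "(\<lambda>t. a t / real t) \<longlonglongrightarrow> 0"
proof (rule LIMSEQ_I)
  fix r :: real assume r: "0 < r"
  from LIMSEQ_D[OF b, of "r/2"] r obtain M where M: "\<And>n. n \<ge> M \<Longrightarrow> \<bar>b n\<bar> < r/2" by auto
  define T' where "T' = max T M"
  have bound: "a t \<le> a T' + (real t - real T') * (r/2)" if "T' \<le> t" for t
    using that
  proof (induct t rule: dec_induct)
    case (step n)
    have "a (Suc n) \<le> a n + b n" using assms(1)[of n] step(1) unfolding T'_def by auto
    moreover have "b n < r/2" using M[of n] step(1) unfolding T'_def by auto
    ultimately show ?case using step(3) by (simp add: field_simps)
  qed simp
  obtain K :: nat where K: "real K > 2 * a T' / r" using reals_Archimedean2 by blast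
  show "\<exists>no. \<forall>n\<ge>no. norm (a n / real n - 0) < r"
  proof (intro exI allI impI)
    fix n assume n: "max T' (Suc K) \<le> n"
    then have "T' \<le> n" and nK: "real n > 2 * a T' / r" and npos: "real n > 0" using K by auto
    have "(real n - real T') * (r/2) \<le> real n * (r/2)" using r by (simp add: left_diff_distrib)
    with bound[OF \<open>T' \<le> n\<close>] have "a n \<le> a T' + real n * (r/2)" by linarith
    moreover have "a T' < real n * (r/2)" using nK r by (simp add: field_simps)
    ultimately have "a n / real n < r" using npos by (simp add: field_simps)
    then show "norm (a n / real n - 0) < r" using nonneg[of n] npos by simp
  qed
qed

lemma cesaro_abs_tendsto_zero:
  fixes h :: "nat \<Rightarrow> real"
  assumes "h \<longlonglongrightarrow> 0"
  shows "(\<lambda>t. (\<Sum>s<t. \<bar>h s\<bar>) / real t) \<longlonglongrightarrow> 0"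
  by (rule sublinear_if_increments_tendsto_zero[where T=0 and b="\<lambda>t. \<bar>h t\<bar>"])
     (auto intro: sum_nonneg tendsto_rabs_zero assms)

lemma weighted_average_tendsto:
  fixes w g :: "nat \<Rightarrow> real"
  assumes w: "(\<lambda>t. (\<Sum>s<t. w s) / real t) \<longlonglongrightarrow> \<omega>" and w_bdd: "\<And>s. \<bar>w s\<bar> \<le> K"
    and g: "g \<longlonglongrightarrow> \<gamma>"
  shows "(\<lambda>t. (\<Sum>s<t. w s * g s) / real t) \<longlonglongrightarrow> \<omega> * \<gamma>"
proof -
  define e where "e t = \<bar>K\<bar> * ((\<Sum>s<t. \<bar>g s - \<gamma>\<bar>) / real t)" for t
  have e: "e \<longlonglongrightarrow> 0"
    unfolding e_def
    by (intro tendsto_mult_right_zero cesaro_abs_tendsto_zero) (use g in \<open>simp add: LIM_zero\<close>)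
  have close: "\<bar>(\<Sum>s<t. w s * g s) / real t - (\<Sum>s<t. w s) / real t * \<gamma>\<bar> \<le> e t" for t
  proof -
    have "\<bar>(\<Sum>s<t. w s * g s) - (\<Sum>s<t. w s) * \<gamma>\<bar> = \<bar>\<Sum>s<t. w s * (g s - \<gamma>)\<bar>"
      by (simp add: sum_distrib_left[symmetric] sum_subtractf right_diff_distrib mult.commute)
    also have "\<dots> \<le> (\<Sum>s<t. \<bar>w s\<bar> * \<bar>g s - \<gamma>\<bar>)" by (rule order_trans[OF sum_abs]) (simp add: abs_mult)
    also have "\<dots> \<le> (\<Sum>s<t. \<bar>K\<bar> * \<bar>g s - \<gamma>\<bar>)"
      using w_bdd by (intro sum_mono mult_right_mono) (auto intro: order_trans[OF _ abs_ge_self])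
    finally have "\<bar>((\<Sum>s<t. w s * g s) - (\<Sum>s<t. w s) * \<gamma>) / real t\<bar> \<le> e t"
      unfolding e_def by (simp add: abs_divide sum_distrib_left[symmetric] divide_right_mono)
    then show ?thesis by (simp add: diff_divide_distrib)
  qed
  have "(\<lambda>t. (\<Sum>s<t. w s * g s) / real t - (\<Sum>s<t. w s) / real t * \<gamma>) \<longlonglongrightarrow> 0"
    using close by (intro Lim_null_comparison[OF _ e] always_eventually allI) simp
  from tendsto_add[OF this tendsto_mult[OF w tendsto_const[of \<gamma>]]] show ?thesis by simp
qed

lemma filterlim_at_top_if_average_tendsto_pos:
  fixes f :: "nat \<Rightarrow> real"
  assumes "(\<lambda>t. f t / real t) \<longlonglongrightarrow> c" "0 < c"
  shows "filterlim f at_top sequentially"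
proof -
  have "filterlim (\<lambda>t. f t / real t * real t) at_top sequentially"
    by (rule filterlim_tendsto_pos_mult_at_top[OF assms filterlim_real_sequentially])
  moreover have "\<forall>\<^sub>F t in sequentially. f t / real t * real t = f t"
    by (rule eventually_sequentiallyI[of 1]) simp
  ultimately show ?thesis by (simp add: filterlim_cong)
qed

lemma ratio_tendsto_zero_if_averages_tendsto:
  fixes f g :: "nat \<Rightarrow> real"
  assumes "(\<lambda>t. f t / real t) \<longlonglongrightarrow> 0" "(\<lambda>t. g t / real t) \<longlonglongrightarrow> c" "c \<noteq> 0"
  shows "(\<lambda>t. f t / g t) \<longlonglongrightarrow> 0"
proof -
  have "(\<lambda>t. (f t / real t) / (g t / real t)) \<longlonglongrightarrow> 0"
    using tendsto_divide[OF assms(1,2,3)] by simp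
  moreover have "\<forall>\<^sub>F t in sequentially. (f t / real t) / (g t / real t) = f t / g t"
    by (rule eventually_sequentiallyI[of 1]) simp
  ultimately show ?thesis by (rule Lim_transform_eventually)
qed

text \<open>One step of the feedback: \<open>Z + W\<close> is \<open>k\<close> times the deviation of the running average, and
  the truncation at 0 can only move \<open>Z\<close> towards 0.\<close>
lemma truncated_feedback_step_abs_le:
  fixes Z W k c s :: real
  assumes "0 < k" "c \<le> k" "0 \<le> c" "0 \<le> s"
  shows "\<bar>Z + (max 0 (s - c * ((Z + W) / k)) - s)\<bar> \<le> \<bar>Z\<bar> + c * \<bar>W\<bar> / k"
proof -
  define e where "e = c * ((Z + W) / k)"
  have "Z - e = (k - c) / k * Z - c * W / k"
    unfolding e_def using assms by (simp add: field_simps)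
  moreover have "0 \<le> (k - c) / k" "(k - c) / k \<le> 1"
    using assms by auto
  then have "\<bar>(k - c) / k * Z\<bar> \<le> \<bar>Z\<bar>"
    by (metis abs_mult abs_of_nonneg abs_ge_zero mult_left_le_one_le)
  moreover have "\<bar>c * W / k\<bar> = c * \<bar>W\<bar> / k" "0 \<le> c * \<bar>W\<bar> / k"
    using assms by (simp_all add: abs_mult abs_divide)
  ultimately have "\<bar>Z - e\<bar> \<le> \<bar>Z\<bar> + c * \<bar>W\<bar> / k" "0 \<le> c * \<bar>W\<bar> / k"
    by (smt (verit))+
  then show ?thesis
    unfolding e_def[symmetric] using \<open>0 \<le> s\<close> by (auto simp: max_def abs_if split: if_splits)
qed

section \<open>The dynamics along one sample path\<close>

lemma length_dem_list: "length (dem_list \<alpha> Cm Cs \<pi> \<phi> L D0 ph phh n t) = t"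
  by (induct t) (simp_all add: Let_def)

lemma nth_dem_list:
  "s < t \<Longrightarrow> dem_list \<alpha> Cm Cs \<pi> \<phi> L D0 ph phh n t ! s = Dseq \<alpha> Cm Cs \<pi> \<phi> L D0 ph phh n s"
proof (induct t)
  case (Suc t)
  show ?case
  proof (cases "s < t")
    case False
    with Suc.prems have "s = t" by simp
    then show ?thesis by (simp add: Dseq_def)
  qed (simp add: Suc Let_def nth_append length_dem_list)
qed simp

lemma Dbar_cong:
  "(\<And>s. s < t \<Longrightarrow> D s = D' s) \<Longrightarrow> Dbar \<phi> D0 phh D j t = Dbar \<phi> D0 phh D' j t"
  unfolding Dbar_def by (intro if_cong refl arg_cong2[where f="(/)"] sum.cong) auto

lemma Dseq_eq_demand:
  "Dseq \<alpha> Cm Cs \<pi> \<phi> L D0 ph phh n t = demand \<alpha> (ph t) (Pseq \<alpha> Cm Cs \<pi> \<phi> L D0 ph phh n t) (n t)"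
proof -
  have "(\<lambda>j. Dbar \<phi> D0 phh (\<lambda>s. dem_list \<alpha> Cm Cs \<pi> \<phi> L D0 ph phh n t ! s) j t)
      = (\<lambda>j. Dbar \<phi> D0 phh (Dseq \<alpha> Cm Cs \<pi> \<phi> L D0 ph phh n) j t)"
    by (intro ext Dbar_cong nth_dem_list)
  then show ?thesis
    unfolding Dseq_def Pseq_def Qseq_def by (simp add: Let_def nth_append length_dem_list)
qed

lemma sqrt_mult_hc_diag: "0 < \<alpha> \<Longrightarrow> sqrt \<alpha> * hc \<alpha> Cm Cs x x = (x - \<alpha> * (Cs + Cm)) / 4"
  unfolding hc_def by (simp add: field_simps)

text \<open>A single sample path of the system under truthful reporting, with the two
  strong-law limits it enjoys almost surely.\<close>
locale truthful_path =
  fixes \<alpha> Cm Cs \<pi> :: real and \<phi> :: "nat \<Rightarrow> real" and L :: nat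
    and D0 ph n \<sigma> :: "nat \<Rightarrow> real" and B :: real
  assumes alpha: "0 < \<alpha>" and phi_mono: "strict_mono_on {1..L} \<phi>"
    and phi1: "\<phi> 1 > \<alpha> * (Cs + Cm)" and pi: "0 \<le> \<pi>"
    and ph_range: "\<And>s. \<exists>j\<in>{1..L}. ph s = \<phi> j"
    and noise_bdd: "\<And>s. \<bar>n s\<bar> \<le> B"
    and sigma_pos: "\<And>j. j \<in> {1..L} \<Longrightarrow> 0 < \<sigma> j"
    and frequency: "\<And>j. j \<in> {1..L} \<Longrightarrow>
          (\<lambda>t. (\<Sum>s<t. if ph s = \<phi> j then 1 else 0) / real t) \<longlonglongrightarrow> \<sigma> j"
    and noise_average: "\<And>j. j \<in> {1..L} \<Longrightarrow>
          (\<lambda>t. (\<Sum>s<t. if ph s = \<phi> j then n s else 0) / real t) \<longlonglongrightarrow> 0"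
begin

abbreviation D where "D \<equiv> Dseq \<alpha> Cm Cs \<pi> \<phi> L D0 ph ph n"
abbreviation P where "P \<equiv> Pseq \<alpha> Cm Cs \<pi> \<phi> L D0 ph ph n"
abbreviation Q where "Q \<equiv> Qseq \<alpha> Cm Cs \<pi> \<phi> L D0 ph ph n"
abbreviation Db where "Db j t \<equiv> Dbar \<phi> D0 ph D j t"

definition target :: "nat \<Rightarrow> real" where
  "target j = (\<phi> j - \<alpha> * (Cs + Cm)) / 4"

definition gain :: real where
  "gain = \<pi> * \<alpha>"

text \<open>In a slot of state j, both the noiseless demand \<open>\<phi> j - \<alpha> P\<^sub>t\<close> and
  \<open>\<alpha> (P\<^sub>t - Q\<^sub>t - C\<^sub>m)\<close> equal \<open>margin j t\<close>.\<close>
definition margin :: "nat \<Rightarrow> nat \<Rightarrow> real" where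
  "margin j t = target j - gain * (Db j t - target j)"

definition visits :: "nat \<Rightarrow> nat \<Rightarrow> real" where
  "visits j t = (\<Sum>s<t. if ph s = \<phi> j then 1 else 0)"

definition noise_total :: "nat \<Rightarrow> nat \<Rightarrow> real" where
  "noise_total j t = (\<Sum>s<t. if ph s = \<phi> j then n s else 0)"

definition excess :: "nat \<Rightarrow> nat \<Rightarrow> real" where
  "excess j t = (\<Sum>s<t. if ph s = \<phi> j then D s else 0) - visits j t * target j - noise_total j t"

lemma gain_nonneg: "0 \<le> gain"
  unfolding gain_def using pi alpha by simp

lemma inj_phi: "inj_on \<phi> {1..L}"
  using phi_mono by (rule strict_mono_on_imp_inj_on)

lemma target_pos: "j \<in> {1..L} \<Longrightarrow> 0 < target j"
proof -
  assume j: "j \<in> {1..L}"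
  then have "\<phi> 1 \<le> \<phi> j"
    using phi_mono by (cases "j = 1") (auto simp: strict_mono_on_def intro: less_imp_le)
  then show ?thesis using phi1 unfolding target_def by simp
qed

lemma rep_index_phi: "j \<in> {1..L} \<Longrightarrow> rep_index \<phi> L (\<phi> j) = j"
  unfolding rep_index_def by (rule the_equality) (use inj_phi in \<open>auto dest: inj_onD\<close>)

lemma Q_eq:
  assumes "j \<in> {1..L}" "ph t = \<phi> j"
  shows "Q t = qstar \<alpha> Cm Cs (\<phi> j) + 2 * \<pi> * (Db j t - target j)"
  unfolding Qseq_def quote_def using assms rep_index_phi sqrt_mult_hc_diag[OF alpha]
  by (simp add: Let_def target_def)

lemma D_eq:
  assumes "j \<in> {1..L}" "ph t = \<phi> j"
  shows "D t = max 0 (margin j t) + n t"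
proof -
  have "\<phi> j - \<alpha> * price \<alpha> Cm (\<phi> j) (qstar \<alpha> Cm Cs (\<phi> j) + 2 * \<pi> * (Db j t - target j))
      = margin j t"
    unfolding price_def qstar_def margin_def target_def gain_def using alpha by (simp add: field_simps)
  then show ?thesis
    by (subst Dseq_eq_demand) (simp add: demand_def Pseq_def Q_eq[OF assms] assms(2))
qed

lemma unit_margin_eq:
  assumes "j \<in> {1..L}" "ph t = \<phi> j"
  shows "P t - Q t - Cm = margin j t / \<alpha>"
  unfolding Pseq_def Q_eq[OF assms] using alpha assms(2)
  by (simp add: price_def qstar_def margin_def target_def gain_def field_simps)

lemma Dbar_eq_target_plus:
  assumes "0 < visits j t"
  shows "Db j t = target j + (excess j t + noise_total j t) / visits j t"
proof -
  let ?S = "{s \<in> {..<t}. ph s = \<phi> j}"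
  have card: "real (card ?S) = visits j t"
    unfolding visits_def by (simp add: sum.inter_filter[symmetric])
  have "?S \<noteq> {}"
    using assms unfolding card[symmetric] by (metis card.empty of_nat_0 less_irrefl)
  moreover have "{s. s < t \<and> ph s = \<phi> j} = ?S" by auto
  moreover have "(\<Sum>s\<in>?S. D s) = (\<Sum>s<t. if ph s = \<phi> j then D s else 0)"
    by (rule sum.inter_filter) simp
  ultimately have "Db j t = (\<Sum>s<t. if ph s = \<phi> j then D s else 0) / visits j t"
    unfolding Dbar_def by (simp only: if_False card)
  also have "\<dots> = target j + (excess j t + noise_total j t) / visits j t"
    unfolding excess_def using assms by (simp add: field_simps)
  finally show ?thesis .
qed

lemma visits_eventually_ge:
  assumes "j \<in> {1..L}"
  shows "\<forall>\<^sub>F t in sequentially. C \<le> visits j t"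
  using filterlim_at_top_if_average_tendsto_pos[OF frequency[OF assms] sigma_pos[OF assms]]
  unfolding visits_def filterlim_at_top by blast

lemma ratio_visits_tendsto_zero:
  assumes "j \<in> {1..L}" "(\<lambda>t. f t / real t) \<longlonglongrightarrow> 0"
  shows "(\<lambda>t. f t / visits j t) \<longlonglongrightarrow> 0"
  using ratio_tendsto_zero_if_averages_tendsto[OF assms(2) frequency[OF assms(1)]]
    sigma_pos[OF assms(1)] unfolding visits_def by simp

lemma abs_excess_Suc_le:
  assumes j: "j \<in> {1..L}" and big: "max 1 gain \<le> visits j t"
  shows "\<bar>excess j (Suc t)\<bar> \<le> \<bar>excess j t\<bar> + gain * \<bar>noise_total j t\<bar> / visits j t"
proof (cases "ph t = \<phi> j")
  case False
  then show ?thesis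
    using big gain_nonneg by (simp add: excess_def visits_def noise_total_def)
next
  case True
  have pos: "0 < visits j t" using big by simp
  have "excess j (Suc t) = excess j t + (D t - target j - n t)"
    using True by (simp add: excess_def visits_def noise_total_def algebra_simps)
  also have "\<dots> = excess j t
      + (max 0 (target j - gain * ((excess j t + noise_total j t) / visits j t)) - target j)"
    using D_eq[OF j True] Dbar_eq_target_plus[OF pos] by (simp add: margin_def)
  finally show ?thesis
    using truncated_feedback_step_abs_le pos big gain_nonneg target_pos[OF j] by simp
qed

lemma excess_sublinear:
  assumes j: "j \<in> {1..L}"
  shows "(\<lambda>t. excess j t / real t) \<longlonglongrightarrow> 0"
proof -
  obtain T where T: "\<And>t. t \<ge> T \<Longrightarrow> max 1 gain \<le> visits j t"
    using visits_eventually_ge[OF j] unfolding eventually_sequentially by blast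
  have noise_ratio: "(\<lambda>t. noise_total j t / visits j t) \<longlonglongrightarrow> 0"
    using ratio_visits_tendsto_zero[OF j noise_average[OF j]] unfolding noise_total_def .
  have "(\<lambda>t. gain * \<bar>noise_total j t / visits j t\<bar>) \<longlonglongrightarrow> 0"
    using tendsto_mult_right_zero[OF tendsto_rabs_zero[OF noise_ratio]] by simp
  moreover have "\<forall>\<^sub>F t in sequentially.
      gain * \<bar>noise_total j t / visits j t\<bar> = gain * \<bar>noise_total j t\<bar> / visits j t"
    using visits_eventually_ge[OF j, of 1] by eventually_elim (simp add: abs_divide)
  ultimately have "(\<lambda>t. gain * \<bar>noise_total j t\<bar> / visits j t) \<longlonglongrightarrow> 0"
    by (rule Lim_transform_eventually)
  with abs_excess_Suc_le[OF j T] have "(\<lambda>t. \<bar>excess j t\<bar> / real t) \<longlonglongrightarrow> 0"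
    by (rule sublinear_if_increments_tendsto_zero[where T=T]) simp_all
  then show ?thesis
    using tendsto_rabs_zero_iff[of "\<lambda>t. excess j t / real t"] by (simp add: abs_divide)
qed

theorem Dbar_tendsto_target:
  assumes j: "j \<in> {1..L}"
  shows "(\<lambda>t. Db j t) \<longlonglongrightarrow> target j"
proof -
  have "(\<lambda>t. target j + excess j t / visits j t + noise_total j t / visits j t)
      \<longlonglongrightarrow> target j + 0 + 0"
    using ratio_visits_tendsto_zero[OF j excess_sublinear[OF j]]
      ratio_visits_tendsto_zero[OF j noise_average[OF j]]
    unfolding noise_total_def[symmetric] by (intro tendsto_intros)
  then have "(\<lambda>t. target j + excess j t / visits j t + noise_total j t / visits j t)
      \<longlonglongrightarrow> target j" by simp
  moreover have "\<forall>\<^sub>F t in sequentially.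
      target j + excess j t / visits j t + noise_total j t / visits j t = Db j t"
    using visits_eventually_ge[OF j, of 1]
    by eventually_elim (simp add: Dbar_eq_target_plus add_divide_distrib)
  ultimately show ?thesis by (rule Lim_transform_eventually)
qed

lemma revenue_eq_sum_states:
  "D s * (P s - Q s - Cm) = (\<Sum>j\<in>{1..L}.
      (if ph s = \<phi> j then 1 else 0) * (max 0 (margin j s) * margin j s / \<alpha>)
    + (if ph s = \<phi> j then n s else 0) * (margin j s / \<alpha>))"
proof -
  obtain i where i: "i \<in> {1..L}" "ph s = \<phi> i" using ph_range[of s] by blast
  define f where "f j = (if ph s = \<phi> j then 1 else 0) * (max 0 (margin j s) * margin j s / \<alpha>)
    + (if ph s = \<phi> j then n s else 0) * (margin j s / \<alpha>)" for j
  have other: "ph s \<noteq> \<phi> j" if "j \<in> {1..L} - {i}" for j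
    using that i inj_phi by (auto dest: inj_onD)
  have "(\<Sum>j\<in>{1..L}. f j) = f i + (\<Sum>j\<in>{1..L} - {i}. f j)"
    by (rule sum.remove) (use i in auto)
  also have "(\<Sum>j\<in>{1..L} - {i}. f j) = 0"
    by (rule sum.neutral) (use other in \<open>auto simp: f_def\<close>)
  also have "f i = D s * (P s - Q s - Cm)"
    using D_eq[OF i] unit_margin_eq[OF i] i by (simp add: f_def algebra_simps)
  finally show ?thesis unfolding f_def by simp
qed

theorem revenue_rate_tendsto:
  "(\<lambda>t. (\<Sum>s<t. D s * (P s - Q s - Cm)) / real t)
     \<longlonglongrightarrow> (1 / (16 * \<alpha>)) * (\<Sum>i=1..L. \<sigma> i * (\<phi> i - \<alpha> * (Cs + Cm))\<^sup>2)"
proof -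
  have margin_lim: "margin j \<longlonglongrightarrow> target j" if "j \<in> {1..L}" for j
  proof -
    have "(\<lambda>t. target j - gain * (Db j t - target j)) \<longlonglongrightarrow> target j - gain * (target j - target j)"
      by (intro tendsto_intros Dbar_tendsto_target that)
    then show ?thesis by (simp add: margin_def[abs_def])
  qed
  have "(\<lambda>t. \<Sum>j\<in>{1..L}.
        (\<Sum>s<t. (if ph s = \<phi> j then 1 else 0) * (max 0 (margin j s) * margin j s / \<alpha>)) / real t
      + (\<Sum>s<t. (if ph s = \<phi> j then n s else 0) * (margin j s / \<alpha>)) / real t)
    \<longlonglongrightarrow> (\<Sum>j\<in>{1..L}. \<sigma> j * (max 0 (target j) * target j / \<alpha>) + 0 * (target j / \<alpha>))"
  proof (intro tendsto_sum tendsto_add)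
    fix j assume j: "j \<in> {1..L}"
    show "(\<lambda>t. (\<Sum>s<t. (if ph s = \<phi> j then 1 else 0) * (max 0 (margin j s) * margin j s / \<alpha>))
        / real t) \<longlonglongrightarrow> \<sigma> j * (max 0 (target j) * target j / \<alpha>)"
      by (rule weighted_average_tendsto[OF frequency[OF j], where K=1])
         (use alpha in \<open>auto intro!: tendsto_intros margin_lim j\<close>)
    have "0 \<le> B" using noise_bdd[of 0] by simp
    then show "(\<lambda>t. (\<Sum>s<t. (if ph s = \<phi> j then n s else 0) * (margin j s / \<alpha>)) / real t)
        \<longlonglongrightarrow> 0 * (target j / \<alpha>)"
      by (intro weighted_average_tendsto[OF noise_average[OF j], where K=B])
         (use alpha in \<open>auto intro!: tendsto_intros margin_lim j noise_bdd\<close>)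
  qed
  moreover have "(\<Sum>j\<in>{1..L}. \<sigma> j * (max 0 (target j) * target j / \<alpha>) + 0 * (target j / \<alpha>))
      = (1 / (16 * \<alpha>)) * (\<Sum>i=1..L. \<sigma> i * (\<phi> i - \<alpha> * (Cs + Cm))\<^sup>2)"
    unfolding sum_distrib_left
  proof (intro sum.cong refl)
    fix j assume "j \<in> {1..L}"
    then have "max 0 (target j) = target j" using target_pos by (simp add: less_imp_le)
    then show "\<sigma> j * (max 0 (target j) * target j / \<alpha>) + 0 * (target j / \<alpha>)
        = 1 / (16 * \<alpha>) * (\<sigma> j * (\<phi> j - \<alpha> * (Cs + Cm))\<^sup>2)"
      by (simp add: target_def power2_eq_square)
  qed
  ultimately show ?thesis
    unfolding revenue_eq_sum_states sum_divide_distrib add_divide_distrib sum.distrib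
    by (subst (1 2) sum.swap) simp
qed

end

section \<open>A strong law for bounded independent variables\<close>

lemma (in prob_space) hoeffding_sum_deviation:
  fixes X :: "nat \<Rightarrow> 'a \<Rightarrow> real"
  assumes indep: "indep_vars (\<lambda>_. borel) X UNIV"
    and bnd: "\<And>t \<omega>. \<omega> \<in> space M \<Longrightarrow> \<bar>X t \<omega>\<bar> \<le> B"
    and mean: "\<And>t. expectation (X t) = \<mu>"
    and "0 < \<epsilon>" "0 < B"
  shows "prob {\<omega>\<in>space M. real (Suc n) * \<epsilon> \<le> \<bar>(\<Sum>s<Suc n. X s \<omega>) - real (Suc n) * \<mu>\<bar>}
         \<le> 2 * exp (- real (Suc n) * (\<epsilon>\<^sup>2 / (2 * B\<^sup>2)))"
proof -
  interpret Hoeffding_ineq M "{..<Suc n}" X "\<lambda>_. -B" "\<lambda>_. B" "real (Suc n) * \<mu>"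
  proof unfold_locales
    show "indep_vars (\<lambda>_. borel) X {..<Suc n}" by (rule indep_vars_subset[OF indep]) auto
    show "AE x in M. X i x \<in> {- B..B}" for i
      by (intro AE_I2) (metis abs_le_iff atLeastAtMost_iff bnd minus_le_iff)
  qed (auto simp: mean)
  have "(\<Sum>i<Suc n. (B - - B)\<^sup>2) = real (Suc n) * (4 * B\<^sup>2)"
    by (simp add: power2_eq_square)
  then have "- 2 * (real (Suc n) * \<epsilon>)\<^sup>2 / (\<Sum>i<Suc n. (B - - B)\<^sup>2)
      = - real (Suc n) * (\<epsilon>\<^sup>2 / (2 * B\<^sup>2))"
    using \<open>0 < B\<close> by (simp add: field_simps power2_eq_square del: of_nat_Suc)
  then show ?thesis
    using Hoeffding_ineq_abs_ge[of "real (Suc n) * \<epsilon>"] \<open>0 < \<epsilon>\<close> \<open>0 < B\<close> by simp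
qed

lemma (in prob_space) AE_eventually_average_close:
  fixes X :: "nat \<Rightarrow> 'a \<Rightarrow> real"
  assumes indep: "indep_vars (\<lambda>_. borel) X UNIV"
    and bnd: "\<And>t \<omega>. \<omega> \<in> space M \<Longrightarrow> \<bar>X t \<omega>\<bar> \<le> B"
    and mean: "\<And>t. expectation (X t) = \<mu>"
    and "0 < \<epsilon>" "0 < B"
  shows "AE \<omega> in M. \<forall>\<^sub>F n in sequentially. \<bar>(\<Sum>s<Suc n. X s \<omega>) / real (Suc n) - \<mu>\<bar> < \<epsilon>"
proof -
  have [measurable]: "X t \<in> borel_measurable M" for t
    using indep unfolding indep_vars_def by auto
  define A where "A n = {\<omega>\<in>space M. real (Suc n) * \<epsilon> \<le> \<bar>(\<Sum>s<Suc n. X s \<omega>) - real (Suc n) * \<mu>\<bar>}" for n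
  define \<kappa> where "\<kappa> = \<epsilon>\<^sup>2 / (2 * B\<^sup>2)"
  have "0 < \<kappa>" unfolding \<kappa>_def using assms by simp
  have prob_A: "measure M (A n) \<le> 2 * exp (- \<kappa>) ^ Suc n" for n
  proof -
    have "measure M (A n) \<le> 2 * exp (- real (Suc n) * \<kappa>)"
      unfolding A_def \<kappa>_def by (rule hoeffding_sum_deviation[OF assms])
    also have "exp (- real (Suc n) * \<kappa>) = exp (- \<kappa>) ^ Suc n"
      using exp_of_nat_mult[of "Suc n" "- \<kappa>"] by (simp add: algebra_simps)
    finally show ?thesis .
  qed
  have "summable (\<lambda>n. 2 * exp (- \<kappa>) ^ Suc n)"
    using \<open>0 < \<kappa>\<close> by (intro summable_mult summable_Suc_iff[THEN iffD2] summable_geometric) auto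
  then have "summable (\<lambda>n. measure M (A n))"
    by (rule summable_comparison_test[rotated]) (use prob_A in auto)
  then have "AE \<omega> in M. \<forall>\<^sub>F n in sequentially. \<omega> \<in> space M - A n"
    by (intro borel_cantelli_AE1) (auto simp: A_def less_top[symmetric])
  moreover have "\<bar>S / real (Suc n) - \<mu>\<bar> < \<epsilon>" if "\<bar>S - real (Suc n) * \<mu>\<bar> < real (Suc n) * \<epsilon>" for S n
  proof -
    have "\<bar>S / real (Suc n) - \<mu>\<bar> = \<bar>S - real (Suc n) * \<mu>\<bar> / real (Suc n)"
      by (simp add: field_simps abs_divide)
    with that show ?thesis by (simp add: field_simps del: of_nat_Suc)
  qed
  ultimately show ?thesis
    by (elim eventually_mono) (auto simp: A_def elim!: eventually_mono)
qed

lemma (in prob_space) strong_law_bounded: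
  fixes X :: "nat \<Rightarrow> 'a \<Rightarrow> real"
  assumes indep: "indep_vars (\<lambda>_. borel) X UNIV"
    and bnd: "\<And>t \<omega>. \<omega> \<in> space M \<Longrightarrow> \<bar>X t \<omega>\<bar> \<le> B"
    and mean: "\<And>t. expectation (X t) = \<mu>"
  shows "AE \<omega> in M. (\<lambda>n. (\<Sum>s<n. X s \<omega>) / real n) \<longlonglongrightarrow> \<mu>"
proof -
  have bnd': "\<bar>X t \<omega>\<bar> \<le> \<bar>B\<bar> + 1" if "\<omega> \<in> space M" for t \<omega>
    using bnd[OF that, of t] by linarith
  have "AE \<omega> in M. \<forall>k::nat. \<forall>\<^sub>F n in sequentially.
      \<bar>(\<Sum>s<Suc n. X s \<omega>) / real (Suc n) - \<mu>\<bar> < 1 / real (Suc k)"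
    unfolding AE_all_countable
    by (intro allI AE_eventually_average_close[OF indep bnd' mean]) auto
  then show ?thesis
  proof (rule eventually_mono)
    fix \<omega> assume close: "\<forall>k::nat. \<forall>\<^sub>F n in sequentially.
        \<bar>(\<Sum>s<Suc n. X s \<omega>) / real (Suc n) - \<mu>\<bar> < 1 / real (Suc k)"
    have "(\<lambda>n. (\<Sum>s<Suc n. X s \<omega>) / real (Suc n)) \<longlonglongrightarrow> \<mu>"
    proof (rule tendstoI)
      fix r :: real assume "0 < r"
      then obtain k :: nat where "1 / real (Suc k) < r" by (rule nat_approx_posE)
      with close[rule_format, of k]
      show "\<forall>\<^sub>F n in sequentially. dist ((\<Sum>s<Suc n. X s \<omega>) / real (Suc n)) \<mu> < r"
        by (elim eventually_mono) (simp add: dist_real_def)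
    qed
    then show "(\<lambda>n. (\<Sum>s<n. X s \<omega>) / real n) \<longlonglongrightarrow> \<mu>"
      by (rule LIMSEQ_imp_Suc)
  qed
qed

section \<open>Independence of paired families\<close>

lemma (in prob_space) indep_set_mono:
  assumes "indep_set A B" "A' \<subseteq> A" "B' \<subseteq> B"
  shows "indep_set A' B'"
  using assms unfolding indep_sets2_eq by blast

lemma (in prob_space) vimage_in_vimage_algebra_PiM:
  fixes X :: "'i \<Rightarrow> 'a \<Rightarrow> 'b::topological_space"
  assumes "A \<in> sets borel"
  shows "X t -` A \<inter> space M \<in> sets (vimage_algebra (space M) (\<lambda>\<omega> t. X t \<omega>) (Pi\<^sub>M UNIV (\<lambda>_. borel)))"
proof -
  let ?P = "Pi\<^sub>M UNIV (\<lambda>_. borel :: 'b measure)"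
  have "(\<lambda>\<omega> t. X t \<omega>) \<in> space M \<rightarrow> space ?P"
    by (auto simp: space_PiM)
  then have sets_eq: "sets (vimage_algebra (space M) (\<lambda>\<omega> t. X t \<omega>) ?P)
      = {(\<lambda>\<omega> t. X t \<omega>) -` C \<inter> space M | C. C \<in> sets ?P}"
    by (rule sets_vimage_algebra2)
  have "(\<lambda>f. f t) -` A \<inter> space ?P \<in> sets ?P"
    using measurable_component_singleton[of t UNIV "\<lambda>_. borel :: 'b measure"] assms
    by (auto intro: measurable_sets)
  moreover have "X t -` A \<inter> space M = (\<lambda>\<omega> t. X t \<omega>) -` ((\<lambda>f. f t) -` A \<inter> space ?P) \<inter> space M"
    by (auto simp: space_PiM)
  ultimately show ?thesis unfolding sets_eq by blast
qed

lemma (in prob_space) indep_var_of_indep_families: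
  fixes X :: "'i \<Rightarrow> 'a \<Rightarrow> 'b::topological_space" and Y :: "'j \<Rightarrow> 'a \<Rightarrow> 'c::topological_space"
    and f :: "'b \<Rightarrow> 'd::topological_space" and g :: "'c \<Rightarrow> 'd"
  assumes XY: "indep_set (sets (vimage_algebra (space M) (\<lambda>\<omega> t. X t \<omega>) (Pi\<^sub>M UNIV (\<lambda>_. borel))))
                         (sets (vimage_algebra (space M) (\<lambda>\<omega> t. Y t \<omega>) (Pi\<^sub>M UNIV (\<lambda>_. borel))))"
    and f: "f \<in> borel_measurable borel" and g: "g \<in> borel_measurable borel"
    and [measurable]: "X s \<in> borel_measurable M" "Y t \<in> borel_measurable M"
  shows "indep_var borel (\<lambda>\<omega>. f (X s \<omega>)) borel (\<lambda>\<omega>. g (Y t \<omega>))"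
  unfolding indep_var_eq
proof (intro conjI indep_set_mono[OF XY])
  show "random_variable borel (\<lambda>\<omega>. f (X s \<omega>))" "random_variable borel (\<lambda>\<omega>. g (Y t \<omega>))"
    using f g by measurable
  have "(\<lambda>\<omega>. f (X s \<omega>)) -` A \<inter> space M = X s -` (f -` A \<inter> space borel) \<inter> space M" for A
    by auto
  then show "sigma_sets (space M) {(\<lambda>\<omega>. f (X s \<omega>)) -` A \<inter> space M |A. A \<in> sets borel}
      \<subseteq> sets (vimage_algebra (space M) (\<lambda>\<omega> t. X t \<omega>) (Pi\<^sub>M UNIV (\<lambda>_. borel)))"
    using sets.sigma_sets_subset[of "{(\<lambda>\<omega>. f (X s \<omega>)) -` A \<inter> space M |A. A \<in> sets borel}"
        "vimage_algebra (space M) (\<lambda>\<omega> t. X t \<omega>) (Pi\<^sub>M UNIV (\<lambda>_. borel))"]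
      vimage_in_vimage_algebra_PiM[OF measurable_sets[OF f], of _ X s]
    by auto
  have "(\<lambda>\<omega>. g (Y t \<omega>)) -` A \<inter> space M = Y t -` (g -` A \<inter> space borel) \<inter> space M" for A
    by auto
  then show "sigma_sets (space M) {(\<lambda>\<omega>. g (Y t \<omega>)) -` A \<inter> space M |A. A \<in> sets borel}
      \<subseteq> sets (vimage_algebra (space M) (\<lambda>\<omega> t. Y t \<omega>) (Pi\<^sub>M UNIV (\<lambda>_. borel)))"
    using sets.sigma_sets_subset[of "{(\<lambda>\<omega>. g (Y t \<omega>)) -` A \<inter> space M |A. A \<in> sets borel}"
        "vimage_algebra (space M) (\<lambda>\<omega> t. Y t \<omega>) (Pi\<^sub>M UNIV (\<lambda>_. borel))"]
      vimage_in_vimage_algebra_PiM[OF measurable_sets[OF g], of _ Y t]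
    by auto
qed

definition rectangle_events :: "'a measure \<Rightarrow> ('a \<Rightarrow> 'b::topological_space) \<Rightarrow> ('a \<Rightarrow> 'c::topological_space)
    \<Rightarrow> 'a set set" where
  "rectangle_events M f g =
     {(f -` A \<inter> space M) \<inter> (g -` B \<inter> space M) | A B. A \<in> sets borel \<and> B \<in> sets borel}"

lemma rectangle_events_Int_stable: "Int_stable (rectangle_events M f g)"
proof (rule Int_stableI)
  fix u v assume "u \<in> rectangle_events M f g" "v \<in> rectangle_events M f g"
  then obtain A1 B1 A2 B2 where "A1 \<in> sets borel" "B1 \<in> sets borel" "A2 \<in> sets borel" "B2 \<in> sets borel"
    "u = (f -` A1 \<inter> space M) \<inter> (g -` B1 \<inter> space M)" "v = (f -` A2 \<inter> space M) \<inter> (g -` B2 \<inter> space M)"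
    unfolding rectangle_events_def by blast
  then show "u \<inter> v \<in> rectangle_events M f g"
    unfolding rectangle_events_def by (intro CollectI exI[of _ "A1 \<inter> A2"] exI[of _ "B1 \<inter> B2"]) auto
qed

lemma measurable_Pair_sigma_rectangle_events:
  fixes f :: "'a \<Rightarrow> 'b::second_countable_topology" and g :: "'a \<Rightarrow> 'c::second_countable_topology"
  assumes "rectangle_events M f g \<subseteq> Pow (space M)"
  shows "(\<lambda>\<omega>. (f \<omega>, g \<omega>)) \<in> measurable (sigma (space M) (rectangle_events M f g)) borel"
proof -
  let ?S = "sigma (space M) (rectangle_events M f g)"
  have f: "f -` A \<inter> space M \<in> sets ?S" if "A \<in> sets borel" for A
  proof -
    have "f -` A \<inter> space M \<in> rectangle_events M f g"
      unfolding rectangle_events_def using that by (intro CollectI exI[of _ A] exI[of _ UNIV]) auto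
    then show ?thesis using assms by (auto simp: sets_measure_of)
  qed
  have g: "g -` B \<inter> space M \<in> sets ?S" if "B \<in> sets borel" for B
  proof -
    have "g -` B \<inter> space M \<in> rectangle_events M f g"
      unfolding rectangle_events_def using that by (intro CollectI exI[of _ UNIV] exI[of _ B]) auto
    then show ?thesis using assms by (auto simp: sets_measure_of)
  qed
  have "f \<in> measurable ?S borel" "g \<in> measurable ?S borel"
    using f g assms by (auto intro!: measurableI simp: space_measure_of)
  from measurable_Pair[OF this] show ?thesis by (simp add: borel_prod)
qed

lemma (in prob_space) indep_sets_rectangle_events:
  fixes X :: "'i \<Rightarrow> 'a \<Rightarrow> 'b::topological_space" and Y :: "'i \<Rightarrow> 'a \<Rightarrow> 'c::topological_space"
  assumes X: "indep_vars (\<lambda>_. borel) X UNIV" and Y: "indep_vars (\<lambda>_. borel) Y UNIV"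
    and XY: "indep_set (sets (vimage_algebra (space M) (\<lambda>\<omega> t. X t \<omega>) (Pi\<^sub>M UNIV (\<lambda>_. borel))))
                       (sets (vimage_algebra (space M) (\<lambda>\<omega> t. Y t \<omega>) (Pi\<^sub>M UNIV (\<lambda>_. borel))))"
  shows "indep_sets (\<lambda>t. rectangle_events M (X t) (Y t)) UNIV"
proof (rule indep_setsI)
  let ?VX = "sets (vimage_algebra (space M) (\<lambda>\<omega> t. X t \<omega>) (Pi\<^sub>M UNIV (\<lambda>_. borel)))"
  let ?VY = "sets (vimage_algebra (space M) (\<lambda>\<omega> t. Y t \<omega>) (Pi\<^sub>M UNIV (\<lambda>_. borel)))"
  have [measurable]: "X t \<in> borel_measurable M" "Y t \<in> borel_measurable M" for t
    using X Y unfolding indep_vars_def by auto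
  have VXY: "?VX \<subseteq> events" "?VY \<subseteq> events" "\<And>a b. a \<in> ?VX \<Longrightarrow> b \<in> ?VY \<Longrightarrow> prob (a \<inter> b) = prob a * prob b"
    using XY unfolding indep_sets2_eq by auto
  show "rectangle_events M (X t) (Y t) \<subseteq> events" for t
    unfolding rectangle_events_def by auto
  fix R J assume J: "J \<noteq> {}" "finite J" and R: "\<forall>j\<in>J. R j \<in> rectangle_events M (X j) (Y j)"
  then obtain A B where AB: "\<And>j. j \<in> J \<Longrightarrow> A j \<in> sets borel \<and> B j \<in> sets borel \<and>
      R j = (X j -` A j \<inter> space M) \<inter> (Y j -` B j \<inter> space M)"
    unfolding rectangle_events_def by simp metis
  define a where "a j = X j -` A j \<inter> space M" for j
  define b where "b j = Y j -` B j \<inter> space M" for j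
  have a: "a j \<in> ?VX" and b: "b j \<in> ?VY" and R_eq: "R j = a j \<inter> b j" if "j \<in> J" for j
    using AB[OF that] unfolding a_def b_def by (auto intro: vimage_in_vimage_algebra_PiM)
  have "prob (\<Inter>j\<in>J. R j) = prob ((\<Inter>j\<in>J. a j) \<inter> (\<Inter>j\<in>J. b j))"
    using R_eq J by (intro arg_cong[where f=prob]) auto
  also have "\<dots> = prob (\<Inter>j\<in>J. a j) * prob (\<Inter>j\<in>J. b j)"
    using J a b by (intro VXY(3) sets.finite_INT) auto
  also have "prob (\<Inter>j\<in>J. a j) = (\<Prod>j\<in>J. prob (a j))"
    unfolding a_def using J AB by (intro indep_varsD[OF X]) auto
  also have "prob (\<Inter>j\<in>J. b j) = (\<Prod>j\<in>J. prob (b j))"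
    unfolding b_def using J AB by (intro indep_varsD[OF Y]) auto
  also have "(\<Prod>j\<in>J. prob (a j)) * (\<Prod>j\<in>J. prob (b j)) = (\<Prod>j\<in>J. prob (a j) * prob (b j))"
    by (rule prod.distrib[symmetric])
  also have "\<dots> = (\<Prod>j\<in>J. prob (R j))"
    using R_eq a b VXY(3) by (intro prod.cong) auto
  finally show "prob (\<Inter>j\<in>J. R j) = (\<Prod>j\<in>J. prob (R j))" .
qed

lemma (in prob_space) indep_vars_Pair_families:
  fixes X :: "'i \<Rightarrow> 'a \<Rightarrow> 'b::second_countable_topology"
    and Y :: "'i \<Rightarrow> 'a \<Rightarrow> 'c::second_countable_topology"
  assumes X: "indep_vars (\<lambda>_. borel) X UNIV" and Y: "indep_vars (\<lambda>_. borel) Y UNIV"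
    and XY: "indep_set (sets (vimage_algebra (space M) (\<lambda>\<omega> t. X t \<omega>) (Pi\<^sub>M UNIV (\<lambda>_. borel))))
                       (sets (vimage_algebra (space M) (\<lambda>\<omega> t. Y t \<omega>) (Pi\<^sub>M UNIV (\<lambda>_. borel))))"
  shows "indep_vars (\<lambda>_. borel) (\<lambda>t \<omega>. (X t \<omega>, Y t \<omega>)) UNIV"
  unfolding indep_vars_def2
proof (intro conjI ballI)
  have [measurable]: "X t \<in> borel_measurable M" "Y t \<in> borel_measurable M" for t
    using X Y unfolding indep_vars_def by auto
  have rect: "rectangle_events M (X t) (Y t) \<subseteq> Pow (space M)" for t
    unfolding rectangle_events_def by auto
  show "random_variable borel (\<lambda>\<omega>. (X t \<omega>, Y t \<omega>))" for t
    using measurable_Pair[of "X t" M borel "Y t" borel] by (simp add: borel_prod)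
  have "indep_sets (\<lambda>t. sigma_sets (space M) (rectangle_events M (X t) (Y t))) UNIV"
    by (rule indep_sets_sigma[OF indep_sets_rectangle_events[OF X Y XY] rectangle_events_Int_stable])
  then show "indep_sets (\<lambda>t. {(\<lambda>\<omega>. (X t \<omega>, Y t \<omega>)) -` A \<inter> space M |A. A \<in> sets borel}) UNIV"
  proof (rule indep_sets_mono_sets)
    fix t
    show "{(\<lambda>\<omega>. (X t \<omega>, Y t \<omega>)) -` A \<inter> space M |A. A \<in> sets borel}
        \<subseteq> sigma_sets (space M) (rectangle_events M (X t) (Y t))"
      using measurable_sets[OF measurable_Pair_sigma_rectangle_events[OF rect]] rect
      by (auto simp: sets_measure_of)
  qed
qed

section \<open>The stochastic model\<close>

locale truthful_market = prob_space M
  for M :: "'a measure" +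
  fixes \<alpha> Cm Cs \<pi> :: real and \<phi> \<sigma> :: "nat \<Rightarrow> real" and L :: nat
    and Phi Phihat N :: "nat \<Rightarrow> 'a \<Rightarrow> real" and B :: real
  assumes alpha: "0 < \<alpha>" and phi_mono: "strict_mono_on {1..L} \<phi>"
    and phi1: "\<phi> 1 > \<alpha> * (Cs + Cm)" and pi: "0 \<le> \<pi>"
    and sigma_pos: "\<And>i. i \<in> {1..L} \<Longrightarrow> 0 < \<sigma> i" and sigma_sum: "(\<Sum>i=1..L. \<sigma> i) = 1"
    and pair_dist: "\<And>t i j. i \<in> {1..L} \<Longrightarrow> j \<in> {1..L} \<Longrightarrow>
          prob {\<omega> \<in> space M. Phi t \<omega> = \<phi> i \<and> Phihat t \<omega> = \<phi> j} = \<sigma> i * r_id i j"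
    and pair_indep: "indep_vars (\<lambda>_. borel) (\<lambda>t \<omega>. (Phi t \<omega>, Phihat t \<omega>)) UNIV"
    and noise_indep: "indep_vars (\<lambda>_. borel) N UNIV"
    and noise_bdd: "\<And>t \<omega>. \<omega> \<in> space M \<Longrightarrow> \<bar>N t \<omega>\<bar> \<le> B"
    and noise_mean: "\<And>t. expectation (N t) = 0"
    and pair_noise_indep: "indep_set
          (sets (vimage_algebra (space M) (\<lambda>\<omega> t. (Phi t \<omega>, Phihat t \<omega>)) (Pi\<^sub>M UNIV (\<lambda>_. borel))))
          (sets (vimage_algebra (space M) (\<lambda>\<omega> t. N t \<omega>) (Pi\<^sub>M UNIV (\<lambda>_. borel))))"
begin

lemma measurable_pair [measurable]: "(\<lambda>\<omega>. (Phi t \<omega>, Phihat t \<omega>)) \<in> borel_measurable M"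
  using pair_indep unfolding indep_vars_def by auto

lemma measurable_Phi [measurable]: "Phi t \<in> borel_measurable M"
  and measurable_Phihat [measurable]: "Phihat t \<in> borel_measurable M"
  using measurable_compose[OF measurable_pair[unfolded borel_prod[symmetric]] measurable_fst]
    measurable_compose[OF measurable_pair[unfolded borel_prod[symmetric]] measurable_snd]
  by (simp_all add: comp_def)

lemma measurable_N [measurable]: "N t \<in> borel_measurable M"
  using noise_indep unfolding indep_vars_def by auto

lemma AE_truthful_report: "AE \<omega> in M. Phihat t \<omega> = Phi t \<omega> \<and> (\<exists>j\<in>{1..L}. Phi t \<omega> = \<phi> j)"
proof -
  define E where "E i = {\<omega>\<in>space M. Phi t \<omega> = \<phi> i \<and> Phihat t \<omega> = \<phi> i}" for i
  have E_sets: "E i \<in> sets M" for i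
    unfolding E_def by measurable
  have "disjoint_family_on E {1..L}"
  proof (unfold disjoint_family_on_def, intro ballI impI)
    fix m n assume "m \<in> {1..L}" "n \<in> {1..L}" "m \<noteq> n"
    then have "\<phi> m \<noteq> \<phi> n" using strict_mono_on_imp_inj_on[OF phi_mono] by (auto dest: inj_onD)
    then show "E m \<inter> E n = {}" unfolding E_def by auto
  qed
  then have "prob (\<Union>i\<in>{1..L}. E i) = (\<Sum>i\<in>{1..L}. prob (E i))"
    using E_sets by (intro finite_measure_finite_Union) auto
  also have "\<dots> = 1"
    using pair_dist sigma_sum unfolding E_def r_id_def by simp
  finally have "AE \<omega> in M. \<omega> \<in> (\<Union>i\<in>{1..L}. E i)" by (rule AE_prob_1)
  then show ?thesis by (rule eventually_mono) (auto simp: E_def)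
qed

lemma prob_Phi_eq:
  assumes "j \<in> {1..L}"
  shows "prob {\<omega>\<in>space M. Phi t \<omega> = \<phi> j} = \<sigma> j"
proof -
  have "prob {\<omega>\<in>space M. Phi t \<omega> = \<phi> j} = prob {\<omega>\<in>space M. Phi t \<omega> = \<phi> j \<and> Phihat t \<omega> = \<phi> j}"
    by (rule finite_measure_eq_AE) (use AE_truthful_report[of t] in \<open>auto elim!: eventually_mono\<close>)
  then show ?thesis using pair_dist[OF assms assms] by (simp add: r_id_def)
qed

lemma AE_frequency_tendsto:
  assumes "j \<in> {1..L}"
  shows "AE \<omega> in M. (\<lambda>n. (\<Sum>s<n. if Phi s \<omega> = \<phi> j then 1 else 0) / real n) \<longlonglongrightarrow> \<sigma> j"
proof (rule strong_law_bounded)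
  have "(\<lambda>p::real \<times> real. if fst p = \<phi> j then 1 else 0 :: real) \<in> borel_measurable borel"
    unfolding borel_prod[symmetric] by measurable
  from indep_vars_compose2[OF pair_indep this]
  show "indep_vars (\<lambda>_. borel) (\<lambda>t \<omega>. if Phi t \<omega> = \<phi> j then 1 else 0 :: real) UNIV"
    by simp
  show "\<bar>if Phi t \<omega> = \<phi> j then 1 else 0 :: real\<bar> \<le> 1" for t \<omega> by simp
  show "expectation (\<lambda>\<omega>. if Phi t \<omega> = \<phi> j then 1 else 0) = \<sigma> j" for t
  proof -
    have "expectation (\<lambda>\<omega>. if Phi t \<omega> = \<phi> j then 1 else 0)
        = expectation (indicator {\<omega>\<in>space M. Phi t \<omega> = \<phi> j})"
      by (rule Bochner_Integration.integral_cong) (auto simp: indicator_def)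
    also have "\<dots> = prob {\<omega>\<in>space M. Phi t \<omega> = \<phi> j}" by (simp add: Int_absorb2)
    finally show ?thesis using prob_Phi_eq[OF assms] by simp
  qed
qed

lemma expectation_noise_on_state: "expectation (\<lambda>\<omega>. if Phi t \<omega> = \<phi> j then N t \<omega> else 0) = 0"
proof -
  let ?g = "\<lambda>\<omega>. if Phi t \<omega> = \<phi> j then 1 else 0 :: real"
  have "(\<lambda>p::real \<times> real. if fst p = \<phi> j then 1 else 0 :: real) \<in> borel_measurable borel"
    unfolding borel_prod[symmetric] by measurable
  from indep_var_of_indep_families[OF pair_noise_indep this measurable_ident]
  have "indep_var borel ?g borel (N t)" by simp
  moreover have "integrable M ?g"
    by (rule integrable_const_bound[where B=1]) auto
  moreover have "integrable M (N t)"
    by (rule integrable_const_bound[where B=B]) (auto intro: noise_bdd)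
  ultimately have "expectation (\<lambda>\<omega>. ?g \<omega> * N t \<omega>) = expectation ?g * expectation (N t)"
    by (rule indep_var_lebesgue_integral)
  moreover have "(\<lambda>\<omega>. ?g \<omega> * N t \<omega>) = (\<lambda>\<omega>. if Phi t \<omega> = \<phi> j then N t \<omega> else 0)"
    by auto
  ultimately show ?thesis
    using noise_mean by simp
qed

lemma AE_noise_average_tendsto:
  assumes "j \<in> {1..L}"
  shows "AE \<omega> in M. (\<lambda>n. (\<Sum>s<n. if Phi s \<omega> = \<phi> j then N s \<omega> else 0) / real n) \<longlonglongrightarrow> 0"
proof (rule strong_law_bounded)
  have "indep_vars (\<lambda>_. borel) (\<lambda>t \<omega>. ((Phi t \<omega>, Phihat t \<omega>), N t \<omega>)) UNIV"
    by (rule indep_vars_Pair_families[OF pair_indep noise_indep pair_noise_indep])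
  moreover have "(\<lambda>q::(real \<times> real) \<times> real. if fst (fst q) = \<phi> j then snd q else 0) \<in> borel_measurable borel"
    unfolding borel_prod[symmetric] by measurable
  ultimately have "indep_vars (\<lambda>_. borel)
      (\<lambda>t \<omega>. (\<lambda>q. if fst (fst q) = \<phi> j then snd q else 0) ((Phi t \<omega>, Phihat t \<omega>), N t \<omega>)) UNIV"
    by (rule indep_vars_compose2)
  then
  show "indep_vars (\<lambda>_. borel) (\<lambda>t \<omega>. if Phi t \<omega> = \<phi> j then N t \<omega> else 0) UNIV"
    by (simp only: fst_conv snd_conv)
  show "\<bar>if Phi t \<omega> = \<phi> j then N t \<omega> else 0\<bar> \<le> \<bar>B\<bar>" if "\<omega> \<in> space M" for t \<omega>
    using noise_bdd[OF that, of t] by auto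
  show "expectation (\<lambda>\<omega>. if Phi t \<omega> = \<phi> j then N t \<omega> else 0) = 0" for t
    by (rule expectation_noise_on_state)
qed

lemma AE_truthful_path:
  "AE \<omega> in M. (\<forall>t. Phihat t \<omega> = Phi t \<omega>) \<and>
     truthful_path \<alpha> Cm Cs \<pi> \<phi> L (\<lambda>s. Phi s \<omega>) (\<lambda>s. N s \<omega>) \<sigma> B"
proof -
  have "AE \<omega> in M. \<forall>t. Phihat t \<omega> = Phi t \<omega> \<and> (\<exists>j\<in>{1..L}. Phi t \<omega> = \<phi> j)"
    using AE_truthful_report by (simp add: AE_all_countable)
  moreover have "AE \<omega> in M. \<forall>j\<in>{1..L}.
      (\<lambda>n. (\<Sum>s<n. if Phi s \<omega> = \<phi> j then 1 else 0) / real n) \<longlonglongrightarrow> \<sigma> j"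
    by (intro AE_finite_allI AE_frequency_tendsto) simp
  moreover have "AE \<omega> in M. \<forall>j\<in>{1..L}.
      (\<lambda>n. (\<Sum>s<n. if Phi s \<omega> = \<phi> j then N s \<omega> else 0) / real n) \<longlonglongrightarrow> 0"
    by (intro AE_finite_allI AE_noise_average_tendsto) simp
  ultimately show ?thesis
    using AE_space
    by eventually_elim
       (auto intro!: truthful_path.intro alpha phi_mono phi1 pi sigma_pos noise_bdd)
qed

end

context truthful_market
begin

lemma AE_Dbar_tendsto:
  assumes "j \<in> {1..L}"
  shows "AE \<omega> in M. (\<lambda>t. Dbar \<phi> D0 (\<lambda>s. Phihat s \<omega>)
      (Dseq \<alpha> Cm Cs \<pi> \<phi> L D0 (\<lambda>s. Phi s \<omega>) (\<lambda>s. Phihat s \<omega>) (\<lambda>s. N s \<omega>)) j t)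
    \<longlonglongrightarrow> (\<phi> j - \<alpha> * (Cs + Cm)) / 4"
  using AE_truthful_path
proof (rule eventually_mono, elim conjE)
  fix \<omega> assume "\<forall>t. Phihat t \<omega> = Phi t \<omega>"
    and "truthful_path \<alpha> Cm Cs \<pi> \<phi> L (\<lambda>s. Phi s \<omega>) (\<lambda>s. N s \<omega>) \<sigma> B"
  with truthful_path.Dbar_tendsto_target[OF _ assms, of _ _ _ _ _ _ _ _ _ D0]
  show "(\<lambda>t. Dbar \<phi> D0 (\<lambda>s. Phihat s \<omega>)
      (Dseq \<alpha> Cm Cs \<pi> \<phi> L D0 (\<lambda>s. Phi s \<omega>) (\<lambda>s. Phihat s \<omega>) (\<lambda>s. N s \<omega>)) j t)
    \<longlonglongrightarrow> (\<phi> j - \<alpha> * (Cs + Cm)) / 4"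
    by (simp add: truthful_path.target_def)
qed

lemma AE_revenue_rate_tendsto:
  "AE \<omega> in M.
     (\<lambda>t. (\<Sum>s<t. Dseq \<alpha> Cm Cs \<pi> \<phi> L D0 (\<lambda>s. Phi s \<omega>) (\<lambda>s. Phihat s \<omega>) (\<lambda>s. N s \<omega>) s
            * (Pseq \<alpha> Cm Cs \<pi> \<phi> L D0 (\<lambda>s. Phi s \<omega>) (\<lambda>s. Phihat s \<omega>) (\<lambda>s. N s \<omega>) s
               - Qseq \<alpha> Cm Cs \<pi> \<phi> L D0 (\<lambda>s. Phi s \<omega>) (\<lambda>s. Phihat s \<omega>) (\<lambda>s. N s \<omega>) s
               - Cm)) / real t)
     \<longlonglongrightarrow> (1 / (16 * \<alpha>)) * (\<Sum>i=1..L. \<sigma> i * (\<phi> i - \<alpha> * (Cs + Cm))\<^sup>2)"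
  using AE_truthful_path
proof (rule eventually_mono, elim conjE)
  fix \<omega> assume "\<forall>t. Phihat t \<omega> = Phi t \<omega>"
    and "truthful_path \<alpha> Cm Cs \<pi> \<phi> L (\<lambda>s. Phi s \<omega>) (\<lambda>s. N s \<omega>) \<sigma> B"
  with truthful_path.revenue_rate_tendsto[of _ _ _ _ _ _ _ _ _ _ D0]
  show "(\<lambda>t. (\<Sum>s<t. Dseq \<alpha> Cm Cs \<pi> \<phi> L D0 (\<lambda>s. Phi s \<omega>) (\<lambda>s. Phihat s \<omega>) (\<lambda>s. N s \<omega>) s
            * (Pseq \<alpha> Cm Cs \<pi> \<phi> L D0 (\<lambda>s. Phi s \<omega>) (\<lambda>s. Phihat s \<omega>) (\<lambda>s. N s \<omega>) s
               - Qseq \<alpha> Cm Cs \<pi> \<phi> L D0 (\<lambda>s. Phi s \<omega>) (\<lambda>s. Phihat s \<omega>) (\<lambda>s. N s \<omega>) s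
               - Cm)) / real t)
     \<longlonglongrightarrow> (1 / (16 * \<alpha>)) * (\<Sum>i=1..L. \<sigma> i * (\<phi> i - \<alpha> * (Cs + Cm))\<^sup>2)"
    by simp
qed

end

theorem theorem2:
  fixes M :: "'a measure" and \<alpha> Cm Cs \<pi> :: real and L :: nat
    and \<phi> \<sigma> D0 :: "nat \<Rightarrow> real" and Phi Phihat N :: "nat \<Rightarrow> 'a \<Rightarrow> real"
  assumes M: "prob_space M"
    and alpha: "0 < \<alpha>" "\<alpha> \<le> 1" and costs: "0 \<le> Cm" "0 \<le> Cs"
    and phi_mono: "strict_mono_on {1..L} \<phi>"
    and sigma_pos: "\<forall>i\<in>{1..L}. 0 < \<sigma> i" and sigma_sum: "(\<Sum>i=1..L. \<sigma> i) = 1"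
    and phi1: "\<phi> 1 > \<alpha> * (Cs + Cm)"
    and pi: "0 \<le> \<pi>"
    and pair_dist: "\<forall>t. \<forall>i\<in>{1..L}. \<forall>j\<in>{1..L}.
          measure M {\<omega> \<in> space M. Phi t \<omega> = \<phi> i \<and> Phihat t \<omega> = \<phi> j} = \<sigma> i * r_id i j"
    and pair_indep: "prob_space.indep_vars M (\<lambda>_. borel) (\<lambda>t \<omega>. (Phi t \<omega>, Phihat t \<omega>)) UNIV"
    and noise_indep: "prob_space.indep_vars M (\<lambda>_. borel) N UNIV"
    and noise_ident: "\<forall>t. distr M borel (N t) = distr M borel (N 0)"
    and noise_bdd: "\<exists>B. \<forall>t. \<forall>\<omega>\<in>space M. \<bar>N t \<omega>\<bar> \<le> B"
    and noise_mean: "\<forall>t. integral\<^sup>L M (N t) = 0"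
    and pair_noise_indep: "prob_space.indep_set M
          (sets (vimage_algebra (space M) (\<lambda>\<omega> t. (Phi t \<omega>, Phihat t \<omega>)) (Pi\<^sub>M UNIV (\<lambda>_. borel))))
          (sets (vimage_algebra (space M) (\<lambda>\<omega> t. N t \<omega>) (Pi\<^sub>M UNIV (\<lambda>_. borel))))"
  shows "(\<forall>j\<in>{1..L}.
            sqrt \<alpha> * hc \<alpha> Cm Cs (\<phi> j) (\<phi> j) = (\<phi> j - \<alpha> * (Cs + Cm)) / 4
          \<and> (AE \<omega> in M.
              (\<lambda>t. Dbar \<phi> D0 (\<lambda>s. Phihat s \<omega>)
                     (Dseq \<alpha> Cm Cs \<pi> \<phi> L D0 (\<lambda>s. Phi s \<omega>) (\<lambda>s. Phihat s \<omega>) (\<lambda>s. N s \<omega>)) j t)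
              \<longlonglongrightarrow> sqrt \<alpha> * hc \<alpha> Cm Cs (\<phi> j) (\<phi> j)))
       \<and> (AE \<omega> in M.
            (\<lambda>t. (\<Sum>s<t. Dseq \<alpha> Cm Cs \<pi> \<phi> L D0 (\<lambda>s. Phi s \<omega>) (\<lambda>s. Phihat s \<omega>) (\<lambda>s. N s \<omega>) s
                   * (Pseq \<alpha> Cm Cs \<pi> \<phi> L D0 (\<lambda>s. Phi s \<omega>) (\<lambda>s. Phihat s \<omega>) (\<lambda>s. N s \<omega>) s
                      - Qseq \<alpha> Cm Cs \<pi> \<phi> L D0 (\<lambda>s. Phi s \<omega>) (\<lambda>s. Phihat s \<omega>) (\<lambda>s. N s \<omega>) s
                      - Cm)) / real t)
            \<longlonglongrightarrow> (1 / (16 * \<alpha>)) * (\<Sum>i=1..L. \<sigma> i * (\<phi> i - \<alpha> * (Cs + Cm))\<^sup>2))"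
proof -
  obtain B where B: "\<forall>t. \<forall>\<omega>\<in>space M. \<bar>N t \<omega>\<bar> \<le> B"
    using noise_bdd by blast
  interpret truthful_market M \<alpha> Cm Cs \<pi> \<phi> \<sigma> L Phi Phihat N B
    unfolding truthful_market_def truthful_market_axioms_def
    using M alpha(1) phi_mono phi1 pi sigma_pos sigma_sum pair_dist pair_indep noise_indep B
      noise_mean pair_noise_indep
    by blast
  show ?thesis
    using AE_Dbar_tendsto AE_revenue_rate_tendsto unfolding sqrt_mult_hc_diag[OF alpha(1)] by blast
qed

end
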